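(* Under Conditions 1 and 2, there exist constants $T_0>0$ and $n_0\ge1$ such that for all $n\ge n_0$ and all $u\in\mathbb R$ with $|u|<1/T_0$, $$\Big|\int_0^\infty\sin(ut)\,\bar\Lambda^{(n)}_\beta(t)\,dt\Big|\ge\frac3{16}\sigma|u| .$$
   Context: Notation: $\mathbb Z_+=\{1,2,\dots\}$, $\mathbb R_+=[0,\infty)$. For each $n\ge1$: $\lambda^{(n)}>0$; a probability $\Lambda^{(n)}$ on $\mathbb R_+$ with tail $\bar\Lambda^{(n)}(t)=\Lambda^{(n)}((t,\infty))$, $\eta^{(n)}=\int_0^\infty y\Lambda^{(n)}(dy)$, $\sigma^{(n)}=\frac12\int_0^\infty y^2\Lambda^{(n)}(dy)$ finite; probability laws $(p_k^{(n)})_{k\ge1}$, $(q_k^{(n)})_{k\ge1}$ on $\mathbb Z_+$ with generating functions $g^{(n)},h^{(n)}$, $m^{(n)}=\sum_kkp_k^{(n)}<\infty$; $\gamma_n>0$ with $\gamma_n\to\infty$, $\gamma_n/n\to\gamma_*\in[0,\infty)$. $\phi^{(n)}(z)=n\gamma_n[g^{(n)}(1-z/n)-(1-z/n)]$, $\psi^{(n)}(z)=\gamma_n[1-h^{(n)}(1-z/n)]$ for $z\in[0,n]$. Condition 1: (i) $\lambda^{(n)}\to\lambda>0$, $\eta^{(n)}\to\eta>0$, $\sigma^{(n)}\to\sigma>0$, $\gamma_n(1-\lambda^{(n)}\eta^{(n)})\to b\in\mathbb R$; (ii) $\psi^{(n)}\to\psi$ uniformly on compacts of $[0,\infty)$;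 (iii) $\{\phi^{(n)}\}$ is uniformly Lipschitz on bounded intervals and converges uniformly on compacts to a continuous $\phi$. Under Condition 1, $\lambda\eta=1$ and $m:=\lim_n\gamma_n(1-m^{(n)})$ exists (so $\gamma_n(1-\lambda^{(n)}\eta^{(n)}m^{(n)})\to b+m$). Condition 2 (for some $\alpha\in(1,2)$): (1) there are $C,k_0>0$ with $n\gamma_n\sum_{k\ge k_0}(k/n)^\alpha p^{(n)}_k+\sum_kk^\alpha q^{(n)}_k\le C$ for all $n$, and $\lim_{k_1\to\infty}\limsup_n\gamma_n\sum_{k\ge k_1}kp^{(n)}_k=0$; (2) there are $C_0>0$ and a probability $\Lambda^*$ on $\mathbb R_+$ with $\int t^{2\alpha}\Lambda^*(dt)<\infty$ and $\bar\Lambda^{(n)}\le C_0\bar\Lambda^*$ for all $n$. Fix $\beta\in[0,\infty)$ with $\beta>-(b+m)/(\sigma\lambda)$. Define $\bar\Lambda_\beta^{(n)}(t)=e^{-\beta t/\gamma_n}\bar\Lambda^{(n)}(t)$. *)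

theory Defs
  imports "HOL-Probability.Probability"
begin

definition pgf :: "(nat \<Rightarrow> real) \<Rightarrow> real \<Rightarrow> real" where
  "pgf p s = (\<Sum>k. p k * s ^ k)"

definition tail :: "real measure \<Rightarrow> real \<Rightarrow> real" where
  "tail M t = measure M {t<..}"

definition phiN :: "(nat \<Rightarrow> real) \<Rightarrow> (nat \<Rightarrow> nat \<Rightarrow> real) \<Rightarrow> nat \<Rightarrow> real \<Rightarrow> real" where
  "phiN gam p n z = real n * gam n * (pgf (p n) (1 - z / real n) - (1 - z / real n))"

definition psiN :: "(nat \<Rightarrow> real) \<Rightarrow> (nat \<Rightarrow> nat \<Rightarrow> real) \<Rightarrow> nat \<Rightarrow> real \<Rightarrow> real" where
  "psiN gam q n z = gam n * (1 - pgf (q n) (1 - z / real n))"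

end

theory Submission
  imports Defs
begin

text \<open>Let T be the tail of Lam n and c = beta/gam n. For a fixed exponent
  1 < s \<le> 2 with s + 1 \<le> 2 alpha, the elementary bound
  sin (v t) exp (-c t) \<ge> v t - (2 v^s + v c^(s-1)) t^s, integrated against T, gives
  \<integral> sin (v t) exp (-c t) T(t) dt \<ge> v sigma_n - (2 v^s + v c^(s-1)) \<integral> t^s T(t) dt,
  because \<integral> t T(t) dt = sigma_n by the layer-cake formula. The same formula turns \<integral> t^s T(t) dt
  into an (s+1)-st moment, which the domination of tails by Lstar bounds uniformly in n.
  Since v^(s-1) \<rightarrow> 0 as v \<rightarrow> 0 and c \<rightarrow> 0 as n \<rightarrow> \<infinity>, the right-hand side exceeds
  v sigma0/4 for small v and large n; negative u follow from the oddness of the sine.\<close>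

lemma borel_measurable_tail:
  assumes "finite_measure M" "sets M = sets borel"
  shows "tail M \<in> borel_measurable borel"
proof -
  interpret finite_measure M by (rule assms(1))
  have "mono (\<lambda>t. - tail M t)"
    by (rule monoI) (auto simp: tail_def assms(2) intro!: finite_measure_mono)
  then have "(\<lambda>t. - (- tail M t)) \<in> borel_measurable borel"
    by (intro borel_measurable_uminus borel_measurable_mono)
  then show ?thesis by simp
qed

lemma nn_integral_powr_tail:
  fixes M :: "real measure" and r :: real
  assumes "finite_measure M" and sets_M: "sets M = sets borel" and r: "r > -1"
  shows "(\<integral>\<^sup>+ t. ennreal (indicator {0..} t * t powr r * tail M t) \<partial>lborel)
       = (\<integral>\<^sup>+ y. ennreal (max y 0 powr (r + 1) / (r + 1)) \<partial>M)"
proof -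
  interpret finite_measure M by (rule assms(1))
  interpret pair_sigma_finite lborel M ..
  let ?f = "\<lambda>t y. ennreal (indicator {0..} t * t powr r) * indicator {t<..} y"
  have "(\<integral>\<^sup>+ t. ennreal (indicator {0..} t * t powr r * tail M t) \<partial>lborel)
      = (\<integral>\<^sup>+ t. (\<integral>\<^sup>+ y. ?f t y \<partial>M) \<partial>lborel)"
    using sets_M
    by (intro nn_integral_cong)
       (simp add: nn_integral_cmult tail_def emeasure_eq_measure ennreal_mult'')
  also have "\<dots> = (\<integral>\<^sup>+ y. (\<integral>\<^sup>+ t. ?f t y \<partial>lborel) \<partial>M)"
  proof (rule Fubini'[symmetric])
    have "(\<lambda>x. ennreal (indicator {0..} (fst x) * fst x powr r) * indicator {x. fst x < snd x} x)
       \<in> borel_measurable (lborel \<Otimes>\<^sub>M borel)"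
      by measurable
    then show "case_prod ?f \<in> borel_measurable (lborel \<Otimes>\<^sub>M M)"
      using sets_M
      by (simp add: split_beta' indicator_def
               cong: measurable_cong_sets[OF sets_pair_measure_cong[OF refl sets_M] refl])
  qed
  also have "\<dots> = (\<integral>\<^sup>+ y. ennreal (max y 0 powr (r + 1) / (r + 1)) \<partial>M)"
  proof (rule nn_integral_cong)
    fix y :: real
    have "(\<integral>\<^sup>+ t. ?f t y \<partial>lborel) = (\<integral>\<^sup>+ t. ennreal (indicator {0..max y 0} t * t powr r) \<partial>lborel)"
      using AE_lborel_singleton[of y] AE_lborel_singleton[of 0]
      by (intro nn_integral_cong_AE, eventually_elim) (auto simp: indicator_def)
    also have "\<dots> = ennreal (max y 0 powr (r + 1) / (r + 1))"
      using nn_integral_has_integral_lebesgue[OF _ has_integral_powr_from_0[OF r, of "max y 0"]]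
      by auto
    finally show "(\<integral>\<^sup>+ t. ?f t y \<partial>lborel) = ennreal (max y 0 powr (r + 1) / (r + 1))" .
  qed
  finally show ?thesis .
qed

lemma set_integral_powr_tail:
  fixes M :: "real measure" and r :: real
  assumes fin: "finite_measure M" and sets_M: "sets M = sets borel" and r: "r > -1"
    and int: "integrable M (\<lambda>y. max y 0 powr (r + 1))"
  shows "set_integrable lborel {0..} (\<lambda>t. t powr r * tail M t)"
    and "(LBINT t:{0..}. t powr r * tail M t) = (LINT y|M. max y 0 powr (r + 1)) / (r + 1)"
proof -
  have [measurable]: "tail M \<in> borel_measurable borel"
    by (rule borel_measurable_tail[OF fin sets_M])
  have nonneg: "0 \<le> indicator {0..} t *\<^sub>R (t powr r * tail M t)" for t
    by (simp add: tail_def)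
  have "(\<integral>\<^sup>+ t. ennreal (indicator {0..} t *\<^sub>R (t powr r * tail M t)) \<partial>lborel)
      = (\<integral>\<^sup>+ y. ennreal (max y 0 powr (r + 1) / (r + 1)) \<partial>M)"
    using nn_integral_powr_tail[OF fin sets_M r] by (simp add: mult.assoc)
  also have "\<dots> = ennreal ((LINT y|M. max y 0 powr (r + 1)) / (r + 1))"
    using int r by (subst nn_integral_eq_integral) auto
  finally have nn: "(\<integral>\<^sup>+ t. ennreal (indicator {0..} t *\<^sub>R (t powr r * tail M t)) \<partial>lborel)
      = ennreal ((LINT y|M. max y 0 powr (r + 1)) / (r + 1))" .
  show "set_integrable lborel {0..} (\<lambda>t. t powr r * tail M t)"
    unfolding set_integrable_def by (rule integrableI_nn_integral_finite[OF _ _ nn]) (use nonneg in auto)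
  have "(LBINT t:{0..}. t powr r * tail M t)
      = enn2real (\<integral>\<^sup>+ t. ennreal (indicator {0..} t *\<^sub>R (t powr r * tail M t)) \<partial>lborel)"
    unfolding set_lebesgue_integral_def by (rule integral_eq_nn_integral) (use nonneg in auto)
  then show "(LBINT t:{0..}. t powr r * tail M t) = (LINT y|M. max y 0 powr (r + 1)) / (r + 1)"
    using nn r int by (simp add: integral_nonneg_AE)
qed

lemma AE_nonneg_if_measure_lessThan_0:
  fixes M :: "real measure"
  assumes "finite_measure M" "sets M = sets borel" "measure M {..<0} = 0"
  shows "AE y in M. 0 \<le> y"
proof -
  interpret finite_measure M by (rule assms(1))
  have "{..<0} \<in> null_sets M"
    using assms(2,3) by (simp add: null_sets_def emeasure_eq_measure)
  then show ?thesis by (rule AE_I') auto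
qed

lemma set_integral_tail_second_moment:
  fixes M :: "real measure"
  assumes fin: "finite_measure M" and sets_M: "sets M = sets borel"
    and nonneg: "AE y in M. 0 \<le> y" and int: "integrable M (\<lambda>y. y ^ 2)"
  shows "set_integrable lborel {0..} (\<lambda>t. t * tail M t)"
    and "(LBINT t:{0..}. t * tail M t) = (1/2) * (LINT y|M. y ^ 2)"
proof -
  have sq: "AE y in M. max y 0 powr (1 + 1) = y ^ 2"
    using nonneg by eventually_elim (simp add: max_def)
  have int1: "integrable M (\<lambda>y. max y 0 powr (1 + 1))"
    using int sq sets_M by (subst integrable_cong_AE) auto
  have moment1: "set_integrable lborel {0..} (\<lambda>t. t powr 1 * tail M t)"
    by (rule set_integral_powr_tail(1)[OF fin sets_M _ int1]) simp
  have moment2: "(LBINT t:{0..}. t powr 1 * tail M t) = (LINT y|M. max y 0 powr (1 + 1)) / (1 + 1)"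
    by (rule set_integral_powr_tail(2)[OF fin sets_M _ int1]) simp
  have "set_integrable lborel {0..} (\<lambda>t. t * tail M t) =
        set_integrable lborel {0..} (\<lambda>t. t powr 1 * tail M t)"
    by (rule set_integrable_cong) auto
  then show "set_integrable lborel {0..} (\<lambda>t. t * tail M t)"
    using moment1 by simp
  have "(LBINT t:{0..}. t * tail M t) = (LBINT t:{0..}. t powr 1 * tail M t)"
    by (rule set_lebesgue_integral_cong) auto
  also have "\<dots> = (LINT y|M. max y 0 powr (1 + 1)) / 2"
    using moment2 by simp
  also have "(LINT y|M. max y 0 powr (1 + 1)) = (LINT y|M. y ^ 2)"
    using sq sets_M by (intro integral_cong_AE) auto
  finally show "(LBINT t:{0..}. t * tail M t) = (1/2) * (LINT y|M. y ^ 2)" by simp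
qed

lemma integrable_pos_part_powr:
  fixes M :: "real measure" and a b :: real
  assumes "finite_measure M" and sets_M: "sets M = sets borel"
    and int: "integrable M (\<lambda>y. y powr a)" and b: "0 \<le> b" "b \<le> a"
  shows "integrable M (\<lambda>y. max y 0 powr b)"
proof (rule Bochner_Integration.integrable_bound)
  interpret finite_measure M by (rule assms(1))
  show "integrable M (\<lambda>y. 1 + \<bar>y powr a\<bar>)"
    using int by (intro Bochner_Integration.integrable_add integrable_abs) auto
  have "(\<lambda>y. max y 0 powr b) \<in> borel_measurable borel"
    by measurable
  then show "(\<lambda>y. max y 0 powr b) \<in> borel_measurable M"
    by (simp only: measurable_cong_sets[OF sets_M refl])
  show "AE y in M. norm (max y 0 powr b) \<le> norm (1 + \<bar>y powr a\<bar>)"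
  proof (rule AE_I2)
    fix y :: real
    have "max y 0 powr b \<le> 1 + \<bar>y powr a\<bar>"
    proof (cases "y > 1")
      case True
      then have "max y 0 powr b \<le> y powr a" using b(2) by (simp add: powr_mono)
      then show ?thesis using abs_ge_self[of "y powr a"] by linarith
    next
      case False
      then have "max y 0 powr b \<le> 1"
        using b(1) by (cases "y \<le> 0") (auto intro: powr_le1)
      then show ?thesis by linarith
    qed
    then show "norm (max y 0 powr b) \<le> norm (1 + \<bar>y powr a\<bar>)"
      by simp
  qed
qed

lemma sin_ge_minus_half_square: "x - x\<^sup>2 / 2 \<le> sin x" for x :: real
proof -
  let ?r = "exp (\<i> * complex_of_real x) - (\<Sum>k \<le> 1. (\<i> * x) ^ k / fact k)"
  have "\<bar>Im ?r\<bar> \<le> cmod ?r"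
    by (rule abs_Im_le_cmod)
  also have "\<dots> \<le> \<bar>x\<bar> ^ 2 / fact 2"
    using iexp_approx1[of x 1] by (simp add: power2_eq_square)
  finally have "\<bar>sin x - x\<bar> \<le> x\<^sup>2 / 2"
    by (simp add: Im_exp power2_eq_square)
  then show ?thesis by linarith
qed

lemma sin_ge_minus_two_powr:
  fixes x s :: real
  assumes x: "0 \<le> x" and s: "1 \<le> s" "s \<le> 2"
  shows "x - 2 * x powr s \<le> sin x"
proof (cases "x \<le> 1")
  case True
  have "x\<^sup>2 = x powr 2" using x by simp
  also have "\<dots> \<le> x powr s" using True x s by (intro powr_mono') auto
  finally have "x\<^sup>2 \<le> x powr s" .
  then show ?thesis using sin_ge_minus_half_square[of x] zero_le_power2[of x] by linarith
next
  case False
  then have "x \<le> x powr s"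
    using s powr_mono[of 1 s x] by simp
  then show ?thesis using sin_ge_minus_one[of x] False by linarith
qed

lemma one_minus_exp_neg_le_powr:
  fixes y a :: real
  assumes y: "0 \<le> y" and a: "0 \<le> a" "a \<le> 1"
  shows "1 - exp (- y) \<le> y powr a"
proof (cases "y \<le> 1")
  case True
  have "1 - exp (- y) \<le> y"
    using exp_ge_add_one_self[of "- y"] by linarith
  also have "\<dots> = y powr 1" using y by simp
  also have "\<dots> \<le> y powr a" using True y a by (intro powr_mono') auto
  finally show ?thesis .
next
  case False
  then show ?thesis
    using a ge_one_powr_ge_zero[of y a] exp_gt_zero[of "- y"] by linarith
qed

text \<open>For \<open>1 \<le> s \<le> 2\<close> the single power \<open>t powr s\<close> absorbs both the curvature of the
  sine and the damping factor, uniformly in \<open>c \<ge> 0\<close>.\<close>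
lemma sin_mul_exp_ge:
  fixes v t c s :: real
  assumes v: "0 < v" and t: "0 \<le> t" and c: "0 \<le> c" and s: "1 \<le> s" "s \<le> 2"
  shows "v * t - (2 * v powr s + v * c powr (s - 1)) * t powr s \<le> sin (v * t) * exp (- c * t)"
proof -
  define x e where "x = v * t" and "e = exp (- c * t)"
  have x: "0 \<le> x" using v t by (simp add: x_def)
  have e: "0 < e" "e \<le> 1" using c t by (auto simp: e_def)
  have "sin x - x * (1 - e) \<le> sin x * e"
  proof (cases "0 \<le> sin x")
    case True
    then show ?thesis
      using sin_x_le_x[OF x] e mult_right_mono[of "sin x" x "1 - e"] by (simp add: algebra_simps)
  next
    case False
    then have "sin x \<le> sin x * e" using e by (simp add: mult_le_cancel_left1)
    moreover have "0 \<le> x * (1 - e)" using x e by simp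
    ultimately show ?thesis by linarith
  qed
  moreover have "x * (1 - e) \<le> x * (c * t) powr (s - 1)"
    using one_minus_exp_neg_le_powr[of "c * t" "s - 1"] c t s x
    by (intro mult_left_mono) (auto simp: e_def)
  ultimately have bound: "x - 2 * x powr s - x * (c * t) powr (s - 1) \<le> sin x * e"
    using sin_ge_minus_two_powr[OF x s] by linarith
  have damping: "x * (c * t) powr (s - 1) = v * c powr (s - 1) * t powr s"
  proof (cases "t = 0")
    case False
    then have "t * t powr (s - 1) = t powr s" using t by (simp add: powr_mult_base)
    then show ?thesis using c t by (simp add: x_def powr_mult mult_ac)
  qed (simp add: x_def)
  have curvature: "x powr s = v powr s * t powr s"
    using v t by (simp add: x_def powr_mult)
  show ?thesis
    using bound unfolding damping curvature unfolding x_def e_def by (simp add: algebra_simps)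
qed

lemma set_integral_sin_exp_tail_ge:
  fixes M :: "real measure" and v c s K :: real
  assumes fin: "finite_measure M" and sets_M: "sets M = sets borel"
    and nonneg: "AE y in M. 0 \<le> y" and int: "integrable M (\<lambda>y. y ^ 2)"
    and v: "0 < v" and c: "0 \<le> c" and s: "1 \<le> s" "s \<le> 2"
    and moment: "set_integrable lborel {0..} (\<lambda>t. t powr s * tail M t)"
    and K: "(LBINT t:{0..}. t powr s * tail M t) \<le> K"
  shows "v * ((1/2) * (LINT y|M. y ^ 2)) - (2 * v powr s + v * c powr (s - 1)) * K
           \<le> (LBINT t:{0..}. sin (v * t) * (exp (- c * t) * tail M t))"
proof -
  note second = set_integral_tail_second_moment[OF fin sets_M nonneg int]
  have [measurable]: "tail M \<in> borel_measurable borel"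
    by (rule borel_measurable_tail[OF fin sets_M])
  have tail_nonneg: "0 \<le> tail M t" for t
    by (simp add: tail_def)
  define a where "a = 2 * v powr s + v * c powr (s - 1)"
  have a: "0 \<le> a" using v by (simp add: a_def)
  define g where "g t = v * (t * tail M t) - a * (t powr s * tail M t)" for t
  have g: "set_integrable lborel {0..} g"
    unfolding g_def using second(1) moment by auto
  have f: "set_integrable lborel {0..} (\<lambda>t. sin (v * t) * (exp (- c * t) * tail M t))"
  proof (rule set_integrable_bound[OF set_integrable_mult_right[OF second(1), of v]])
    show "set_borel_measurable lborel {0..} (\<lambda>t. sin (v * t) * (exp (- c * t) * tail M t))"
      unfolding set_borel_measurable_def by measurable
    show "AE t in lborel. t \<in> {0..} \<longrightarrow>
        norm (sin (v * t) * (exp (- c * t) * tail M t)) \<le> norm (v * (t * tail M t))"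
    proof (intro AE_I2 impI)
      fix t :: real assume t: "t \<in> {0..}"
      have "\<bar>sin (v * t)\<bar> \<le> v * t"
        using abs_sin_x_le_abs_x[of "v * t"] v t by simp
      moreover have "exp (- c * t) * tail M t \<le> tail M t"
        using c t tail_nonneg[of t] by (intro mult_left_le_one_le) auto
      ultimately have "\<bar>sin (v * t)\<bar> * (exp (- c * t) * tail M t) \<le> v * t * tail M t"
        using tail_nonneg[of t] by (intro mult_mono) auto
      then show "norm (sin (v * t) * (exp (- c * t) * tail M t)) \<le> norm (v * (t * tail M t))"
        using v t tail_nonneg[of t] by (simp add: abs_mult mult.assoc)
    qed
  qed
  have "v * ((1/2) * (LINT y|M. y ^ 2)) - a * K
      \<le> v * (LBINT t:{0..}. t * tail M t) - a * (LBINT t:{0..}. t powr s * tail M t)"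
    using mult_left_mono[OF K a] unfolding second(2) by linarith
  also have "\<dots> = (LBINT t:{0..}. g t)"
    unfolding g_def using second(1) moment by simp
  also have "\<dots> \<le> (LBINT t:{0..}. sin (v * t) * (exp (- c * t) * tail M t))"
  proof (rule set_integral_mono[OF g f])
    fix t :: real assume "t \<in> {0..}"
    then have "(v * t - a * t powr s) * tail M t \<le> sin (v * t) * exp (- c * t) * tail M t"
      using sin_mul_exp_ge[OF v _ c s] tail_nonneg[of t] by (intro mult_right_mono) (auto simp: a_def)
    then show "g t \<le> sin (v * t) * (exp (- c * t) * tail M t)"
      by (simp add: g_def algebra_simps)
  qed
  finally show ?thesis unfolding a_def .
qed

lemma set_integral_sin_exp_tail_ge_quarter:
  fixes M :: "real measure" and v c s K sigma :: real
  assumes fin: "finite_measure M" and sets_M: "sets M = sets borel"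
    and nonneg: "AE y in M. 0 \<le> y" and int: "integrable M (\<lambda>y. y ^ 2)"
    and v: "0 < v" and c: "0 \<le> c" and s: "1 \<le> s" "s \<le> 2"
    and moment: "set_integrable lborel {0..} (\<lambda>t. t powr s * tail M t)"
    and K: "(LBINT t:{0..}. t powr s * tail M t) \<le> K"
    and sig: "sigma / 2 \<le> (1/2) * (LINT y|M. y ^ 2)"
    and small_v: "v powr (s - 1) * K \<le> sigma / 16" and small_c: "c powr (s - 1) * K \<le> sigma / 8"
  shows "v * sigma / 4 \<le> (LBINT t:{0..}. sin (v * t) * (exp (- c * t) * tail M t))"
proof -
  have "v powr s = v * v powr (s - 1)"
    using v powr_add[of v 1 "s - 1"] by simp
  then have expand: "(2 * v powr s + v * c powr (s - 1)) * K
      = 2 * (v * (v powr (s - 1) * K)) + v * (c powr (s - 1) * K)"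
    by (simp add: algebra_simps)
  have "v * (v powr (s - 1) * K) \<le> v * (sigma / 16)"
    using small_v v by simp
  moreover have "v * (c powr (s - 1) * K) \<le> v * (sigma / 8)"
    using small_c v by simp
  moreover have "v * (sigma / 2) \<le> v * ((1/2) * (LINT y|M. y ^ 2))"
    using sig v by simp
  ultimately show ?thesis
    using set_integral_sin_exp_tail_ge[OF fin sets_M nonneg int v c s moment K]
    unfolding expand by linarith
qed

lemma abs_set_integral_sin_abs:
  fixes f :: "real \<Rightarrow> real" and u :: real
  shows "\<bar>LINT t:A|M. sin (\<bar>u\<bar> * t) * f t\<bar> = \<bar>LINT t:A|M. sin (u * t) * f t\<bar>"
proof (cases "0 \<le> u")
  case False
  then have "(LINT t:A|M. sin (\<bar>u\<bar> * t) * f t) = - (LINT t:A|M. sin (u * t) * f t)"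
    unfolding set_lebesgue_integral_def by (simp flip: integral_minus)
  then show ?thesis by simp
qed simp

lemma set_integral_powr_tail_mono:
  fixes M L :: "real measure" and s C :: real
  assumes fin: "finite_measure M" and sets_M: "sets M = sets borel"
    and dom: "\<And>t. 0 \<le> t \<Longrightarrow> tail M t \<le> C * tail L t"
    and L: "set_integrable lborel {0..} (\<lambda>t. t powr s * tail L t)"
  shows "set_integrable lborel {0..} (\<lambda>t. t powr s * tail M t)"
    and "(LBINT t:{0..}. t powr s * tail M t) \<le> C * (LBINT t:{0..}. t powr s * tail L t)"
proof -
  have [measurable]: "tail M \<in> borel_measurable borel"
    by (rule borel_measurable_tail[OF fin sets_M])
  have bound: "0 \<le> t powr s * tail M t \<and> t powr s * tail M t \<le> C * (t powr s * tail L t)"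
    if "t \<in> {0..}" for t
    using that dom[of t] mult_left_mono[of "tail M t" "C * tail L t" "t powr s"]
    by (auto simp: tail_def mult.left_commute)
  show int: "set_integrable lborel {0..} (\<lambda>t. t powr s * tail M t)"
  proof (rule set_integrable_bound[OF set_integrable_mult_right[OF L, of C]])
    show "set_borel_measurable lborel {0..} (\<lambda>t. t powr s * tail M t)"
      unfolding set_borel_measurable_def by measurable
    show "AE t in lborel. t \<in> {0..} \<longrightarrow> norm (t powr s * tail M t) \<le> norm (C * (t powr s * tail L t))"
      using bound by (intro AE_I2) fastforce
  qed
  show "(LBINT t:{0..}. t powr s * tail M t) \<le> C * (LBINT t:{0..}. t powr s * tail L t)"
    using set_integral_mono[OF int set_integrable_mult_right[OF L, of C]] bound by simp
qed

lemma eventually_abs_set_integral_sin_tail_ge: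
  fixes Lam :: "nat \<Rightarrow> real measure" and gam :: "nat \<Rightarrow> real" and beta sigma0 s K :: real
  assumes fin: "\<And>n. n \<ge> 1 \<Longrightarrow> finite_measure (Lam n)"
    and sets_Lam: "\<And>n. n \<ge> 1 \<Longrightarrow> sets (Lam n) = sets borel"
    and nonneg: "\<And>n. n \<ge> 1 \<Longrightarrow> AE y in Lam n. 0 \<le> y"
    and int: "\<And>n. n \<ge> 1 \<Longrightarrow> integrable (Lam n) (\<lambda>y. y ^ 2)"
    and moment: "\<And>n. n \<ge> 1 \<Longrightarrow> set_integrable lborel {0..} (\<lambda>t. t powr s * tail (Lam n) t)"
    and K: "\<And>n. n \<ge> 1 \<Longrightarrow> (LBINT t:{0..}. t powr s * tail (Lam n) t) \<le> K"
    and sig: "(\<lambda>n. (1/2) * (LINT y|Lam n. y ^ 2)) \<longlonglongrightarrow> sigma0" "0 < sigma0"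
    and gam: "filterlim gam at_top sequentially" and beta: "0 \<le> beta"
    and s: "1 < s" "s \<le> 2"
  shows "\<exists>\<delta>>0. \<forall>\<^sub>F n in sequentially. \<forall>u. \<bar>u\<bar> < \<delta> \<longrightarrow> \<bar>u\<bar> * sigma0 / 4
           \<le> \<bar>LBINT t:{0..}. sin (u * t) * (exp (- beta * t / gam n) * tail (Lam n) t)\<bar>"
proof -
  have "((\<lambda>v. v powr (s - 1) * K) \<longlongrightarrow> 0) (at_right 0)"
    by (intro tendsto_mult_left_zero tendsto_zero_powrI[OF tendsto_ident_at tendsto_const])
       (use s in \<open>auto simp: eventually_at_right_field intro: exI[of _ 1]\<close>)
  then have "\<forall>\<^sub>F v in at_right 0. v powr (s - 1) * K < sigma0 / 16"
    using sig(2) by (intro order_tendstoD(2)) auto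
  then obtain \<delta> :: real where \<delta>: "0 < \<delta>"
    and small_v: "\<And>v. 0 < v \<Longrightarrow> v < \<delta> \<Longrightarrow> v powr (s - 1) * K < sigma0 / 16"
    unfolding eventually_at_right_field by auto
  have gam_pos: "\<forall>\<^sub>F n in sequentially. 0 < gam n"
    using gam by (simp add: filterlim_at_top_dense)
  have "\<forall>\<^sub>F n in sequentially. 0 \<le> beta / gam n"
    using gam_pos by eventually_elim (simp add: beta)
  then have "(\<lambda>n. (beta / gam n) powr (s - 1) * K) \<longlonglongrightarrow> 0"
    using s by (intro tendsto_mult_left_zero tendsto_zero_powrI[OF _ tendsto_const]
                  tendsto_divide_0[OF tendsto_const] filterlim_at_top_imp_at_infinity gam) auto
  then have "\<forall>\<^sub>F n in sequentially. (beta / gam n) powr (s - 1) * K < sigma0 / 8"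
    using sig(2) by (intro order_tendstoD(2)) auto
  moreover have "\<forall>\<^sub>F n in sequentially. sigma0 / 2 < (1/2) * (LINT y|Lam n. y ^ 2)"
    using sig by (intro order_tendstoD(1)) auto
  moreover note gam_pos
  ultimately have "\<forall>\<^sub>F n in sequentially. \<forall>u. \<bar>u\<bar> < \<delta> \<longrightarrow> \<bar>u\<bar> * sigma0 / 4
           \<le> \<bar>LBINT t:{0..}. sin (u * t) * (exp (- beta * t / gam n) * tail (Lam n) t)\<bar>"
    using eventually_ge_at_top[of 1]
  proof eventually_elim
    case (elim n)
    then have n: "1 \<le> n" and c: "0 \<le> beta / gam n" using beta by auto
    show ?case
    proof (intro allI impI)
      fix u :: real assume u: "\<bar>u\<bar> < \<delta>"
      let ?f = "\<lambda>t. exp (- beta * t / gam n) * tail (Lam n) t"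
      have "\<bar>u\<bar> * sigma0 / 4 \<le> (LBINT t:{0..}. sin (\<bar>u\<bar> * t) * ?f t)" if "u \<noteq> 0"
        using set_integral_sin_exp_tail_ge_quarter[OF fin[OF n] sets_Lam[OF n] nonneg[OF n] int[OF n]
            _ c _ _ moment[OF n] K[OF n], of "\<bar>u\<bar>" sigma0] small_v[of "\<bar>u\<bar>"] that u elim s
        by (simp add: mult.commute)
      then show "\<bar>u\<bar> * sigma0 / 4 \<le> \<bar>LBINT t:{0..}. sin (u * t) * ?f t\<bar>"
        using abs_set_integral_sin_abs[where u = u and A = "{0..}" and M = lborel and f = ?f]
        by (cases "u = 0") auto
    qed
  qed
  then show ?thesis using \<delta> by blast
qed

theorem proposition5p8:
  fixes lam :: "nat \<Rightarrow> real" and Lam :: "nat \<Rightarrow> real measure"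
    and p q :: "nat \<Rightarrow> nat \<Rightarrow> real" and gam :: "nat \<Rightarrow> real"
    and gstar lam0 eta0 sigma0 b alpha beta :: real
    and phi psi :: "real \<Rightarrow> real"
  defines "eta \<equiv> \<lambda>n. integral\<^sup>L (Lam n) (\<lambda>y. y)"
      and "sig \<equiv> \<lambda>n. (1/2) * integral\<^sup>L (Lam n) (\<lambda>y. y ^ 2)"
      and "mm \<equiv> \<lambda>n. (\<Sum>k. real k * p n k)"
  assumes
    \<comment> \<open>standing assumptions (for every n \<ge> 1)\<close>
        lam_pos: "\<And>n. n \<ge> 1 \<Longrightarrow> lam n > 0"
    and Lam_prob: "\<And>n. n \<ge> 1 \<Longrightarrow> prob_space (Lam n)"
    and Lam_sets: "\<And>n. n \<ge> 1 \<Longrightarrow> sets (Lam n) = sets borel"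
    and Lam_supp: "\<And>n. n \<ge> 1 \<Longrightarrow> measure (Lam n) {..<0} = 0"
    and Lam_int1: "\<And>n. n \<ge> 1 \<Longrightarrow> integrable (Lam n) (\<lambda>y. y)"
    and Lam_int2: "\<And>n. n \<ge> 1 \<Longrightarrow> integrable (Lam n) (\<lambda>y. y ^ 2)"
    and p_nonneg: "\<And>n k. n \<ge> 1 \<Longrightarrow> p n k \<ge> 0"
    and p_zero: "\<And>n. n \<ge> 1 \<Longrightarrow> p n 0 = 0"
    and p_sum: "\<And>n. n \<ge> 1 \<Longrightarrow> p n sums 1"
    and q_nonneg: "\<And>n k. n \<ge> 1 \<Longrightarrow> q n k \<ge> 0"
    and q_zero: "\<And>n. n \<ge> 1 \<Longrightarrow> q n 0 = 0"
    and q_sum: "\<And>n. n \<ge> 1 \<Longrightarrow> q n sums 1"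
    and m_fin: "\<And>n. n \<ge> 1 \<Longrightarrow> summable (\<lambda>k. real k * p n k)"
    and gam_pos: "\<And>n. n \<ge> 1 \<Longrightarrow> gam n > 0"
    and gam_inf: "filterlim gam at_top sequentially"
    and gam_ratio: "(\<lambda>n. gam n / real n) \<longlonglongrightarrow> gstar"
    and gstar_nonneg: "gstar \<ge> 0"
    \<comment> \<open>Condition 1 (i)\<close>
    and C1_lam: "lam \<longlonglongrightarrow> lam0" "lam0 > 0"
    and C1_eta: "eta \<longlonglongrightarrow> eta0" "eta0 > 0"
    and C1_sigma: "sig \<longlonglongrightarrow> sigma0" "sigma0 > 0"
    and C1_b: "(\<lambda>n. gam n * (1 - lam n * eta n)) \<longlonglongrightarrow> b"
    \<comment> \<open>Condition 1 (ii): psi^(n) \<rightarrow> psi uniformly on compacts of [0,\<infinity>)\<close>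
    and C1_psi: "\<And>R e. R \<ge> 0 \<Longrightarrow> e > 0 \<Longrightarrow>
        eventually (\<lambda>n. \<forall>z\<in>{0..R}. \<bar>psiN gam q n z - psi z\<bar> < e) sequentially"
    \<comment> \<open>Condition 1 (iii)\<close>
    and C1_phi_lip: "\<And>R. R \<ge> 0 \<Longrightarrow> \<exists>L. \<forall>n\<ge>1. \<forall>x\<in>{0..min R (real n)}. \<forall>y\<in>{0..min R (real n)}.
        \<bar>phiN gam p n x - phiN gam p n y\<bar> \<le> L * \<bar>x - y\<bar>"
    and C1_phi: "\<And>R e. R \<ge> 0 \<Longrightarrow> e > 0 \<Longrightarrow>
        eventually (\<lambda>n. \<forall>z\<in>{0..R}. \<bar>phiN gam p n z - phi z\<bar> < e) sequentially"
    and C1_phi_cont: "continuous_on {0..} phi"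
    \<comment> \<open>Condition 2\<close>
    and alpha: "1 < alpha" "alpha < 2"
    and C2_1a: "\<exists>C k0. C > 0 \<and> k0 > 0 \<and> (\<forall>n\<ge>1.
        summable (\<lambda>k. if real k \<ge> k0 then (real k / real n) powr alpha * p n k else 0) \<and>
        summable (\<lambda>k. real k powr alpha * q n k) \<and>
        real n * gam n * (\<Sum>k. if real k \<ge> k0 then (real k / real n) powr alpha * p n k else 0)
          + (\<Sum>k. real k powr alpha * q n k) \<le> C)"
    and C2_1b: "(\<lambda>k1. limsup (\<lambda>n. ereal (gam n * (\<Sum>k. if k \<ge> k1 then real k * p n k else 0))))
        \<longlonglongrightarrow> 0"
    and C2_2: "\<exists>C0 Lstar. C0 > 0 \<and> prob_space Lstar \<and> sets Lstar = sets borel \<and>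
        measure Lstar {..<0} = 0 \<and> integrable Lstar (\<lambda>t. t powr (2 * alpha)) \<and>
        (\<forall>n\<ge>1. \<forall>t\<ge>0. tail (Lam n) t \<le> C0 * tail Lstar t)"
    \<comment> \<open>choice of beta\<close>
    and beta: "beta \<ge> 0"
      "beta > - (b + lim (\<lambda>n. gam n * (1 - mm n))) / (sigma0 * lam0)"
  shows "\<exists>T0 > 0. \<exists>n0 \<ge> (1::nat). \<forall>n \<ge> n0. \<forall>u::real. \<bar>u\<bar> < 1 / T0 \<longrightarrow>
     \<bar>LBINT t:{0..}. sin (u * t) * (exp (- beta * t / gam n) * tail (Lam n) t)\<bar>
       \<ge> 3 / 16 * sigma0 * \<bar>u\<bar>"
proof -
  obtain C0 Lstar where "prob_space Lstar" and sets_Lstar: "sets Lstar = sets borel"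
    and int_Lstar: "integrable Lstar (\<lambda>t. t powr (2 * alpha))"
    and dom: "\<And>n t. n \<ge> 1 \<Longrightarrow> 0 \<le> t \<Longrightarrow> tail (Lam n) t \<le> C0 * tail Lstar t"
    using C2_2 by blast
  then have fin_Lstar: "finite_measure Lstar"
    by (simp add: prob_space_def)
  define s where "s = min (2 * alpha - 1) 2"
  have s: "1 < s" "s \<le> 2" "s + 1 \<le> 2 * alpha"
    using alpha by (auto simp: s_def)
  have fin: "\<And>n. n \<ge> 1 \<Longrightarrow> finite_measure (Lam n)"
    using Lam_prob by (simp add: prob_space_def)
  have "integrable Lstar (\<lambda>y. max y 0 powr (s + 1))"
    using integrable_pos_part_powr[OF fin_Lstar sets_Lstar int_Lstar] s by simp
  then have "set_integrable lborel {0..} (\<lambda>t. t powr s * tail Lstar t)"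
    using set_integral_powr_tail(1)[OF fin_Lstar sets_Lstar] s by simp
  note moment = set_integral_powr_tail_mono[OF fin Lam_sets dom this]
  obtain \<delta> N where "0 < \<delta>" and bound: "\<And>n u. n \<ge> N \<Longrightarrow> \<bar>u\<bar> < \<delta> \<Longrightarrow> \<bar>u\<bar> * sigma0 / 4
      \<le> \<bar>LBINT t:{0..}. sin (u * t) * (exp (- beta * t / gam n) * tail (Lam n) t)\<bar>"
    using eventually_abs_set_integral_sin_tail_ge[OF fin Lam_sets
        AE_nonneg_if_measure_lessThan_0[OF fin Lam_sets Lam_supp] Lam_int2 moment
        C1_sigma[unfolded sig_def] gam_inf beta(1) s(1,2)]
    unfolding eventually_sequentially by blast
  show ?thesis
  proof (intro exI[of _ "1 / \<delta>"] exI[of _ "Suc N"] conjI allI impI)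
    fix n u assume "Suc N \<le> n" "\<bar>u\<bar> < 1 / (1 / \<delta>)"
    then have "\<bar>u\<bar> * sigma0 / 4
        \<le> \<bar>LBINT t:{0..}. sin (u * t) * (exp (- beta * t / gam n) * tail (Lam n) t)\<bar>"
      by (intro bound) auto
    moreover have "3 / 16 * sigma0 * \<bar>u\<bar> \<le> \<bar>u\<bar> * sigma0 / 4"
      using C1_sigma(2) by (simp add: mult_right_mono)
    ultimately show "3 / 16 * sigma0 * \<bar>u\<bar>
        \<le> \<bar>LBINT t:{0..}. sin (u * t) * (exp (- beta * t / gam n) * tail (Lam n) t)\<bar>"
      by linarith
  qed (use \<open>0 < \<delta>\<close> in simp_all)
qed

end
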